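(* For integers $n,m\ge 0$, the number of lattice paths from $(0,0)$ to $(2n+m,m)$ with steps $(1,1),(1,-1),(2,0)$ that never go below the $x$-axis equals $$\sum_{p=0}^{n}\left(\binom{2n-2p+m}{n-p}-\binom{2n-2p+m}{n-p-1}\right)\binom{2n+m-p}{p}.$$
   Context: Binomial coefficients $\binom{a}{b}$ with $b<0$ are $0$. *)

theory Defs
  imports Main
begin

definition path_steps :: "(int \<times> int) set" where
  "path_steps = {(1, 1), (1, -1), (2, 0)}"

text \<open>A lattice path from (0,0) is a list of steps; the k-th visited point is the sum of
  the first k steps. It ends at (a,b) and never goes below the x-axis.\<close>
definition nonneg_paths :: "int \<Rightarrow> int \<Rightarrow> (int \<times> int) list set" where
  "nonneg_paths a b = {xs. set xs \<subseteq> path_steps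
      \<and> sum_list (map fst xs) = a \<and> sum_list (map snd xs) = b
      \<and> (\<forall>k\<le>length xs. 0 \<le> sum_list (map snd (take k xs)))}"

definition ibinom :: "int \<Rightarrow> int \<Rightarrow> int" where
  "ibinom a b = (if b < 0 then 0 else int (nat a choose nat b))"

end

theory Submission
  imports Defs
begin

text \<open>Refine the count by the numbers \<open>a\<close>, \<open>b\<close>, \<open>p\<close> of up, down and flat steps and by a
  starting height \<open>h\<close>. Deleting the flat steps leaves a ballot path, counted by the reflection
  principle as \<open>C(a+b,b) - C(a+b,b-h-1)\<close>, and the \<open>p\<close> flat steps can be placed freely among
  the \<open>a+b+p\<close> positions. The count and this product satisfy the same first-step recursion,
  so they agree by induction on the length. For the theorem, a path to \<open>(2n+m,m)\<close> with \<open>p\<close> flat steps has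
  \<open>n-p+m\<close> up and \<open>n-p\<close> down steps.\<close>

definition stays_nonneg :: "int \<Rightarrow> (int \<times> int) list \<Rightarrow> bool" where
  "stays_nonneg h xs \<longleftrightarrow> (\<forall>k\<le>length xs. 0 \<le> h + sum_list (map snd (take k xs)))"

lemma stays_nonneg_Nil [simp]: "stays_nonneg h [] \<longleftrightarrow> 0 \<le> h"
  by (simp add: stays_nonneg_def)

lemma stays_nonneg_Cons [simp]:
  "stays_nonneg h (x # xs) \<longleftrightarrow> 0 \<le> h \<and> stays_nonneg (h + snd x) xs"
proof
  assume A: "stays_nonneg h (x # xs)"
  have "0 \<le> h"
    using A[unfolded stays_nonneg_def, rule_format, of 0] by simp
  moreover have "stays_nonneg (h + snd x) xs"
    unfolding stays_nonneg_def
  proof (intro allI impI)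
    fix k assume "k \<le> length xs"
    then show "0 \<le> h + snd x + sum_list (map snd (take k xs))"
      using A[unfolded stays_nonneg_def, rule_format, of "Suc k"] by (simp add: add.assoc)
  qed
  ultimately show "0 \<le> h \<and> stays_nonneg (h + snd x) xs" ..
next
  assume B: "0 \<le> h \<and> stays_nonneg (h + snd x) xs"
  show "stays_nonneg h (x # xs)"
    unfolding stays_nonneg_def
  proof (intro allI impI)
    fix k assume k: "k \<le> length (x # xs)"
    show "0 \<le> h + sum_list (map snd (take k (x # xs)))"
    proof (cases k)
      case 0
      then show ?thesis using B by simp
    next
      case (Suc j)
      then show ?thesis using B k unfolding stays_nonneg_def by (simp add: add.assoc)
    qed
  qed
qed

definition step_count_paths :: "int \<Rightarrow> nat \<Rightarrow> nat \<Rightarrow> nat \<Rightarrow> (int \<times> int) list set" where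
  "step_count_paths h a b p = {xs. set xs \<subseteq> path_steps
     \<and> count_list xs (1, 1) = a \<and> count_list xs (1, -1) = b \<and> count_list xs (2, 0) = p
     \<and> stays_nonneg h xs}"

lemma length_eq_step_counts:
  "set xs \<subseteq> path_steps \<Longrightarrow>
    length xs = count_list xs (1, 1) + count_list xs (1, -1) + count_list xs (2, 0)"
  by (induction xs) (auto simp: path_steps_def)

lemma sum_list_eq_step_counts:
  assumes "set xs \<subseteq> path_steps"
  shows "sum_list (map fst xs) =
           int (count_list xs (1, 1)) + int (count_list xs (1, -1)) + 2 * int (count_list xs (2, 0))"
    and "sum_list (map snd xs) = int (count_list xs (1, 1)) - int (count_list xs (1, -1))"
  using assms by (induction xs) (auto simp: path_steps_def)

lemma finite_step_count_paths: "finite (step_count_paths h a b p)"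
proof (rule finite_subset)
  show "step_count_paths h a b p \<subseteq> {xs. set xs \<subseteq> path_steps \<and> length xs = a + b + p}"
    unfolding step_count_paths_def using length_eq_step_counts by auto
  show "finite {xs. set xs \<subseteq> path_steps \<and> length xs = a + b + p}"
    by (rule finite_lists_length_eq) (simp add: path_steps_def)
qed

lemma step_count_paths_neg_height: "h < 0 \<Longrightarrow> step_count_paths h a b p = {}"
  by (auto simp: step_count_paths_def stays_nonneg_def)

lemma step_count_paths_0_0_0: "0 \<le> h \<Longrightarrow> step_count_paths h 0 0 0 = {[]}"
  by (auto simp: step_count_paths_def dest: length_eq_step_counts)

lemma step_count_paths_first_step:
  assumes "a + b + p \<noteq> 0" and "0 \<le> h"
  shows "step_count_paths h a b p =
      Cons (1, 1) ` (if a > 0 then step_count_paths (h + 1) (a - 1) b p else {})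
    \<union> Cons (1, -1) ` (if b > 0 then step_count_paths (h - 1) a (b - 1) p else {})
    \<union> Cons (2, 0) ` (if p > 0 then step_count_paths h a b (p - 1) else {})"
    (is "_ = ?R")
proof (intro equalityI subsetI)
  fix xs assume xs: "xs \<in> step_count_paths h a b p"
  then have "xs \<noteq> []"
    using assms(1) by (auto simp: step_count_paths_def)
  then obtain y ys where xs_eq: "xs = y # ys"
    by (cases xs) auto
  have "y \<in> path_steps"
    using xs xs_eq by (auto simp: step_count_paths_def)
  then consider "y = (1, 1)" | "y = (1, -1)" | "y = (2, 0)"
    by (auto simp: path_steps_def)
  then show "xs \<in> ?R"
    using xs unfolding xs_eq by cases (auto simp: step_count_paths_def)
next
  fix xs assume "xs \<in> ?R"
  then show "xs \<in> step_count_paths h a b p"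
    using assms(2) by (auto simp: step_count_paths_def path_steps_def split: if_splits)
qed

lemma card_step_count_paths_first_step:
  assumes "a + b + p \<noteq> 0" and "0 \<le> h"
  shows "int (card (step_count_paths h a b p)) =
      (if a > 0 then int (card (step_count_paths (h + 1) (a - 1) b p)) else 0)
    + (if b > 0 then int (card (step_count_paths (h - 1) a (b - 1) p)) else 0)
    + (if p > 0 then int (card (step_count_paths h a b (p - 1))) else 0)"
proof -
  define U where "U = (if a > 0 then step_count_paths (h + 1) (a - 1) b p else {})"
  define D where "D = (if b > 0 then step_count_paths (h - 1) a (b - 1) p else {})"
  define F where "F = (if p > 0 then step_count_paths h a b (p - 1) else {})"
  have fin: "finite U" "finite D" "finite F"
    unfolding U_def D_def F_def by (auto simp: finite_step_count_paths)
  have inj: "inj_on (Cons x) X" for x :: "int \<times> int" and X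
    by simp
  have "card (step_count_paths h a b p) = card U + card D + card F"
    unfolding step_count_paths_first_step[OF assms] U_def[symmetric] D_def[symmetric] F_def[symmetric]
    using fin by (subst card_Un_disjoint, auto)+ (simp_all add: card_image[OF inj])
  then show ?thesis
    unfolding U_def D_def F_def by simp
qed

lemma ibinom_neg_right: "k < 0 \<Longrightarrow> ibinom N k = 0"
  by (simp add: ibinom_def)

lemma ibinom_eq_0_if_less: "0 \<le> N \<Longrightarrow> N < k \<Longrightarrow> ibinom N k = 0"
  by (simp add: ibinom_def binomial_eq_0 nat_less_eq_zless)

lemma ibinom_0_right [simp]: "ibinom N 0 = 1"
  by (simp add: ibinom_def)

lemma ibinom_diag: "0 \<le> N \<Longrightarrow> ibinom N N = 1"
  by (simp add: ibinom_def)

lemma ibinom_Pascal: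
  assumes "1 \<le> N"
  shows "ibinom N k = ibinom (N - 1) k + ibinom (N - 1) (k - 1)"
proof (cases "k > 0")
  case True
  have "nat N = Suc (nat (N - 1))" "nat k = Suc (nat (k - 1))"
    using assms True by simp_all
  then show ?thesis
    using True unfolding ibinom_def by (simp only: binomial_Suc_Suc) (simp add: add.commute)
qed (auto simp: ibinom_def)

definition ballot_number :: "int \<Rightarrow> nat \<Rightarrow> nat \<Rightarrow> int" where
  "ballot_number h a b = ibinom (int a + int b) (int b) - ibinom (int a + int b) (int b - h - 1)"

definition flat_ballot_number :: "int \<Rightarrow> nat \<Rightarrow> nat \<Rightarrow> nat \<Rightarrow> int" where
  "flat_ballot_number h a b p = ibinom (int a + int b + int p) (int p) * ballot_number h a b"

text \<open>The side condition \<open>b \<le> h + a\<close> (the path can end at height \<open>\<ge> 0\<close>) is what makes the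
  reflected term vanish at the boundary \<open>a = 0\<close>; at \<open>h = 0\<close> the down-term vanishes because
  both binomials coincide.\<close>

lemma ballot_number_first_step:
  assumes h: "0 \<le> h" and hb: "int b \<le> h + int a" and ab: "a + b \<noteq> 0"
  shows "ballot_number h a b =
      (if a > 0 then ballot_number (h + 1) (a - 1) b else 0)
    + (if b > 0 \<and> h > 0 then ballot_number (h - 1) a (b - 1) else 0)"
proof -
  define M where "M = int a + int b"
  have M1: "1 \<le> M"
    using ab unfolding M_def by linarith
  have "ballot_number h a b =
        (ibinom (M - 1) (int b) - ibinom (M - 1) (int b - h - 2))
      + (ibinom (M - 1) (int b - 1) - ibinom (M - 1) (int b - h - 1))"
    unfolding ballot_number_def M_def[symmetric]
    using ibinom_Pascal[OF M1, of "int b"] ibinom_Pascal[OF M1, of "int b - h - 1"]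
    by (simp add: algebra_simps)
  moreover have "(if a > 0 then ballot_number (h + 1) (a - 1) b else 0) =
      ibinom (M - 1) (int b) - ibinom (M - 1) (int b - h - 2)"
  proof (cases "a > 0")
    case True
    then show ?thesis
      unfolding ballot_number_def M_def by (simp add: of_nat_diff algebra_simps)
  next
    case False
    then have "a = 0" "b \<ge> 1"
      using ab by simp_all
    then have "ibinom (M - 1) (int b) = 0" "ibinom (M - 1) (int b - h - 2) = 0"
      using hb unfolding M_def by (auto intro: ibinom_eq_0_if_less ibinom_neg_right)
    then show ?thesis
      using False by simp
  qed
  moreover have "(if b > 0 \<and> h > 0 then ballot_number (h - 1) a (b - 1) else 0) =
      ibinom (M - 1) (int b - 1) - ibinom (M - 1) (int b - h - 1)"
  proof (cases "b > 0 \<and> h > 0")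
    case True
    then show ?thesis
      unfolding ballot_number_def M_def by (simp add: of_nat_diff algebra_simps)
  next
    case False
    then have "b = 0 \<or> h = 0"
      using h by linarith
    then show ?thesis
      using h by (auto simp: ibinom_neg_right)
  qed
  ultimately show ?thesis
    by simp
qed

lemma flat_ballot_number_first_step:
  assumes h: "0 \<le> h" and hb: "int b \<le> h + int a" and abp: "a + b + p \<noteq> 0"
  shows "flat_ballot_number h a b p =
      (if a > 0 then flat_ballot_number (h + 1) (a - 1) b p else 0)
    + (if b > 0 \<and> h > 0 then flat_ballot_number (h - 1) a (b - 1) p else 0)
    + (if p > 0 then flat_ballot_number h a b (p - 1) else 0)"
proof (cases "a + b = 0")
  case True
  then have "a = 0" "b = 0" "p > 0"
    using abp by auto
  then show ?thesis
    using h by (simp add: flat_ballot_number_def ballot_number_def ibinom_neg_right ibinom_diag)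
next
  case False
  note ballot = ballot_number_first_step[OF h hb False]
  show ?thesis
  proof (cases "p > 0")
    case False
    then show ?thesis
      using ballot by (simp add: flat_ballot_number_def)
  next
    case True
    define K where "K = int a + int b + int p"
    have K1: "1 \<le> K"
      using True unfolding K_def by linarith
    have "flat_ballot_number h a b p =
        ibinom (K - 1) (int p) * ballot_number h a b
      + ibinom (K - 1) (int p - 1) * ballot_number h a b"
      unfolding flat_ballot_number_def K_def[symmetric] ibinom_Pascal[OF K1]
      by (simp add: algebra_simps)
    also have "ibinom (K - 1) (int p) * ballot_number h a b =
        (if a > 0 then flat_ballot_number (h + 1) (a - 1) b p else 0)
      + (if b > 0 \<and> h > 0 then flat_ballot_number (h - 1) a (b - 1) p else 0)"
      unfolding ballot flat_ballot_number_def K_def by (simp add: of_nat_diff algebra_simps)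
    also have "ibinom (K - 1) (int p - 1) * ballot_number h a b = flat_ballot_number h a b (p - 1)"
      unfolding flat_ballot_number_def K_def using True by (simp add: of_nat_diff algebra_simps)
    finally show ?thesis
      using True by simp
  qed
qed

lemma card_step_count_paths:
  assumes "0 \<le> h" and "int b \<le> h + int a"
  shows "int (card (step_count_paths h a b p)) = flat_ballot_number h a b p"
  using assms
proof (induction "a + b + p" arbitrary: h a b p)
  case 0
  then show ?case
    by (simp add: step_count_paths_0_0_0 flat_ballot_number_def ballot_number_def ibinom_neg_right)
next
  case (Suc N)
  have nonempty: "a + b + p \<noteq> 0"
    using Suc.hyps(2) by linarith
  have up: "(if a > 0 then int (card (step_count_paths (h + 1) (a - 1) b p)) else 0) =
      (if a > 0 then flat_ballot_number (h + 1) (a - 1) b p else 0)"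
    using Suc.hyps(1)[of "a - 1" b p "h + 1"] Suc by auto
  have down: "(if b > 0 then int (card (step_count_paths (h - 1) a (b - 1) p)) else 0) =
      (if b > 0 \<and> h > 0 then flat_ballot_number (h - 1) a (b - 1) p else 0)"
    using Suc.hyps(1)[of a "b - 1" p "h - 1"] Suc by (auto simp: step_count_paths_neg_height)
  have flat: "(if p > 0 then int (card (step_count_paths h a b (p - 1))) else 0) =
      (if p > 0 then flat_ballot_number h a b (p - 1) else 0)"
    using Suc.hyps(1)[of a b "p - 1" h] Suc by auto
  show ?case
    unfolding card_step_count_paths_first_step[OF nonempty Suc.prems(1)] up down flat
    using flat_ballot_number_first_step[OF Suc.prems nonempty] by simp
qed

lemma nonneg_paths_eq_UN_flat_count:
  "nonneg_paths (2 * int n + int m) (int m) = (\<Union>p\<in>{0..n}. step_count_paths 0 (n + m - p) (n - p) p)"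
proof (intro equalityI subsetI)
  fix xs assume xs: "xs \<in> nonneg_paths (2 * int n + int m) (int m)"
  define p where "p = count_list xs (2, 0)"
  have steps: "set xs \<subseteq> path_steps"
    using xs by (simp add: nonneg_paths_def)
  have "int (count_list xs (1, 1)) + int (count_list xs (1, -1)) + 2 * int p = 2 * int n + int m"
    and "int (count_list xs (1, 1)) - int (count_list xs (1, -1)) = int m"
    using sum_list_eq_step_counts[OF steps] xs unfolding nonneg_paths_def p_def by auto
  then have "p \<le> n" "count_list xs (1, -1) = n - p" "count_list xs (1, 1) = n + m - p"
    by linarith+
  moreover have "stays_nonneg 0 xs"
    using xs by (simp add: nonneg_paths_def stays_nonneg_def)
  ultimately show "xs \<in> (\<Union>p\<in>{0..n}. step_count_paths 0 (n + m - p) (n - p) p)"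
    using steps unfolding step_count_paths_def p_def by auto
next
  fix xs assume "xs \<in> (\<Union>p\<in>{0..n}. step_count_paths 0 (n + m - p) (n - p) p)"
  then obtain p where "p \<le> n" and xs: "xs \<in> step_count_paths 0 (n + m - p) (n - p) p"
    by auto
  moreover have "set xs \<subseteq> path_steps"
    using xs by (simp add: step_count_paths_def)
  ultimately show "xs \<in> nonneg_paths (2 * int n + int m) (int m)"
    using sum_list_eq_step_counts[of xs]
    unfolding step_count_paths_def nonneg_paths_def stays_nonneg_def by auto
qed

lemma card_nonneg_paths_eq_sum:
  "int (card (nonneg_paths (2 * int n + int m) (int m))) =
    (\<Sum>p\<in>{0..n}. flat_ballot_number 0 (n + m - p) (n - p) p)"
proof -
  have "card (nonneg_paths (2 * int n + int m) (int m)) =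
      (\<Sum>p\<in>{0..n}. card (step_count_paths 0 (n + m - p) (n - p) p))"
    unfolding nonneg_paths_eq_UN_flat_count
    by (rule card_UN_disjoint) (simp_all add: finite_step_count_paths, auto simp: step_count_paths_def)
  then show ?thesis
    by (simp add: card_step_count_paths)
qed

lemma flat_ballot_number_at_axis:
  assumes "p \<le> n"
  shows "flat_ballot_number 0 (n + m - p) (n - p) p =
    (ibinom (2 * int n - 2 * int p + int m) (int n - int p)
       - ibinom (2 * int n - 2 * int p + int m) (int n - int p - 1))
    * ibinom (2 * int n + int m - int p) (int p)"
proof -
  have "int (n + m - p) + int (n - p) + int p = 2 * int n + int m - int p"
    and "int (n + m - p) + int (n - p) = 2 * int n - 2 * int p + int m"
    and "int (n - p) = int n - int p"
    using assms by simp_all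
  then show ?thesis
    unfolding flat_ballot_number_def ballot_number_def by (simp only: mult.commute diff_0_right)
qed

theorem lemma3p8:
  fixes n m :: nat
  shows "int (card (nonneg_paths (2 * int n + int m) (int m))) =
    (\<Sum>p=0..int n. (ibinom (2 * int n - 2 * p + int m) (int n - p)
                   - ibinom (2 * int n - 2 * p + int m) (int n - p - 1))
                  * ibinom (2 * int n + int m - p) p)"
proof -
  have "{0..int n} = int ` {0..n}"
    by (simp add: image_int_atLeastAtMost)
  moreover have "(\<Sum>p\<in>{0..n}. flat_ballot_number 0 (n + m - p) (n - p) p) =
      (\<Sum>p\<in>{0..n}. (ibinom (2 * int n - 2 * int p + int m) (int n - int p)
                   - ibinom (2 * int n - 2 * int p + int m) (int n - int p - 1))
                  * ibinom (2 * int n + int m - int p) (int p))"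
    by (rule sum.cong) (simp_all add: flat_ballot_number_at_axis)
  ultimately show ?thesis
    by (simp add: card_nonneg_paths_eq_sum sum.reindex flat_ballot_number_at_axis)
qed

end
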